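(* Let $d\ge1$, let $v\in(\Sigma^d)^*$ be nonempty, let $r\in[0,d-1]$ and let $w$ be the length-$r$ prefix of $v$. Then $\downarrow_{\preceq_d}(v^*w)=\{u\in\Sigma^*\mid |u|\equiv r \pmod d \text{ and } \kappa_d(u)(i)\subseteq\kappa_d(v)(i)\text{ for all }i\in[1,d]\}$.
   Context: $u\preceq_d v$ iff $v$ arises from $u$ by inserting factors whose lengths are divisible by $d$, i.e. $u=u_0\cdots u_n$ and $v=u_0v_1u_1\cdots v_nu_n$ with $d\mid |v_i|$. For $w\in\Sigma^*$ and $i\in[1,d]$, $\kappa_d(w)(i)$ is the set of letters $a\in\Sigma$ that occur in $w$ at some position $p$ (positions numbered from $1$) with $p\equiv i\pmod d$. $\downarrow_{\preceq_d}S=\{x\mid\exists s\in S: x\preceq_d s\}$. *)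

theory Defs
  imports Main
begin

text \<open>u \<preceq>_d v: v arises from u = u_0 ... u_n by inserting factors v_1..v_n
  with d dividing each |v_i|: v = u_0 v_1 u_1 ... v_n u_n.\<close>
definition subw_d :: "nat \<Rightarrow> 'a list \<Rightarrow> 'a list \<Rightarrow> bool" where
  "subw_d d u v \<longleftrightarrow>
     (\<exists>us vs. length us = Suc (length vs) \<and> u = concat us \<and>
        v = hd us @ concat (map (\<lambda>(x, y). x @ y) (zip vs (tl us))) \<and>
        (\<forall>x\<in>set vs. d dvd length x))"

definition kappa :: "nat \<Rightarrow> 'a list \<Rightarrow> nat \<Rightarrow> 'a set" where
  "kappa d w i = {a. \<exists>p\<in>{1..length w}. w ! (p - 1) = a \<and> p mod d = i mod d}"

definition down_d :: "nat \<Rightarrow> 'a list set \<Rightarrow> 'a list set" where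
  "down_d d S = {x. \<exists>s\<in>S. subw_d d x s}"

definition star_conc :: "'a list \<Rightarrow> 'a list \<Rightarrow> 'a list set" where
  "star_conc v w = {concat (replicate n v) @ w | n. True}"

end

theory Submission
  imports Defs
begin

text \<open>Every word of \<open>v\<^sup>* w\<close> is a prefix of the periodic word \<open>v\<^sup>\<omega>\<close>, and
  position \<open>p\<close> of \<open>v\<^sup>\<omega>\<close> carries the letter \<open>v ! (p mod |v|)\<close>, whose residue class modulo \<open>d\<close>
  is that of \<open>p\<close> because \<open>d\<close> divides \<open>|v|\<close>. Inserting blocks of length divisible by \<open>d\<close> preserves
  residues of positions and of the length, which gives the inclusion from left to right.
  Conversely, a word \<open>u\<close> satisfying the residue conditions is embedded into a prefix of
  \<open>v\<^sup>\<omega>\<close> letter by letter: the next letter of \<open>u\<close> occurs in \<open>v\<close> at a position \<open>q\<close> of the right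
  residue, so one skips ahead to the next occurrence of position \<open>q\<close> in \<open>v\<^sup>\<omega>\<close>, which is a
  jump of length divisible by \<open>d\<close>. Finally the prefix is padded by a block of length divisible
  by \<open>d\<close> to reach a word of the form \<open>v\<^sup>n w\<close>.\<close>

inductive subw_ind :: "nat \<Rightarrow> 'a list \<Rightarrow> 'a list \<Rightarrow> bool" for d where
  Nil: "subw_ind d [] []"
| Cons: "subw_ind d u s \<Longrightarrow> subw_ind d (a # u) (a # s)"
| insert: "subw_ind d u s \<Longrightarrow> d dvd length x \<Longrightarrow> subw_ind d u (x @ s)"

lemma subw_ind_refl: "subw_ind d u u"
  by (induction u) (auto intro: subw_ind.intros)

lemma subw_ind_append:
  "subw_ind d u1 s1 \<Longrightarrow> subw_ind d u2 s2 \<Longrightarrow> subw_ind d (u1 @ u2) (s1 @ s2)"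
  by (induction rule: subw_ind.induct) (auto intro: subw_ind.intros)

lemma subw_ind_append_right:
  assumes "subw_ind d u s" and "d dvd length x"
  shows "subw_ind d u (s @ x)"
  using subw_ind_append[OF assms(1) subw_ind.insert[OF subw_ind.Nil assms(2)]] by simp

lemma subw_ind_imp_subw_d: "subw_ind d u s \<Longrightarrow> subw_d d u s"
proof (induction rule: subw_ind.induct)
  case Nil
  show ?case unfolding subw_d_def by (rule exI[of _ "[[]]"], rule exI[of _ "[]"]) simp
next
  case (Cons u s a)
  then obtain u0 us vs where "length us = length vs" "u = u0 @ concat us"
    "s = u0 @ concat (map (\<lambda>(x, y). x @ y) (zip vs us))" "\<forall>x\<in>set vs. d dvd length x"
    unfolding subw_d_def by (metis concat.simps(2) length_Suc_conv list.sel(1,3))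
  then show ?case unfolding subw_d_def
    by (intro exI[of _ "(a # u0) # us"] exI[of _ vs]) auto
next
  case (insert u s x)
  then obtain us vs where "length us = Suc (length vs)" "u = concat us"
    "s = hd us @ concat (map (\<lambda>(x, y). x @ y) (zip vs (tl us)))" "\<forall>x\<in>set vs. d dvd length x"
    unfolding subw_d_def by blast
  with insert.hyps(2) show ?case unfolding subw_d_def
    by (intro exI[of _ "[] # us"] exI[of _ "x # vs"]) (cases us; auto)
qed

lemma subw_ind_interleave:
  "length us = Suc (length vs) \<Longrightarrow> \<forall>x\<in>set vs. d dvd length x \<Longrightarrow>
   subw_ind d (concat us) (hd us @ concat (map (\<lambda>(x, y). x @ y) (zip vs (tl us))))"
proof (induction vs arbitrary: us)
  case Nil
  then show ?case by (cases us) (auto simp: subw_ind_refl)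
next
  case (Cons x vs)
  then obtain u0 u1 us' where us: "us = u0 # u1 # us'"
    by (metis length_Suc_conv)
  have "subw_ind d (concat (u1 # us'))
      (u1 @ concat (map (\<lambda>(x, y). x @ y) (zip vs us')))"
    using Cons.IH[of "u1 # us'"] Cons.prems us by simp
  then have "subw_ind d (concat (u1 # us'))
      (x @ u1 @ concat (map (\<lambda>(x, y). x @ y) (zip vs us')))"
    using Cons.prems by (auto intro: subw_ind.insert)
  from subw_ind_append[OF subw_ind_refl[of d u0] this] show ?case
    using us by simp
qed

lemma subw_d_iff_subw_ind: "subw_d d u s \<longleftrightarrow> subw_ind d u s"
  using subw_ind_imp_subw_d subw_ind_interleave unfolding subw_d_def by blast

lemma subw_ind_length_mod: "subw_ind d u s \<Longrightarrow> length s mod d = length u mod d"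
proof (induction rule: subw_ind.induct)
  case (Cons u s a)
  then show ?case by (metis length_Cons mod_Suc_eq)
qed (auto elim: dvdE)

lemma subw_ind_nth:
  "subw_ind d u s \<Longrightarrow> j < length u \<Longrightarrow>
   \<exists>j'<length s. s ! j' = u ! j \<and> j' mod d = j mod d"
proof (induction arbitrary: j rule: subw_ind.induct)
  case (Cons u s a)
  show ?case
  proof (cases j)
    case (Suc j0)
    with Cons obtain j' where "j' < length s" "s ! j' = u ! j0" "j' mod d = j0 mod d" by auto
    moreover from \<open>j' mod d = j0 mod d\<close> have "Suc j' mod d = Suc j0 mod d"
      by (metis mod_Suc_eq)
    ultimately show ?thesis using Suc by (intro exI[of _ "Suc j'"]) auto
  qed auto
next
  case (insert u s x)
  then obtain j' where "j' < length s" "s ! j' = u ! j" "j' mod d = j mod d" by auto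
  with insert.hyps(2) show ?case
    by (intro exI[of _ "length x + j'"]) (auto simp: nth_append)
qed auto

lemma mem_kappa_iff: "a \<in> kappa d w i \<longleftrightarrow> (\<exists>j<length w. w ! j = a \<and> Suc j mod d = i mod d)"
  unfolding kappa_def
proof safe
  fix p assume "p \<in> {1..length w}" "p mod d = i mod d"
  then show "\<exists>j<length w. w ! j = w ! (p - 1) \<and> Suc j mod d = i mod d"
    by (intro exI[of _ "p - 1"]) auto
next
  fix j assume "j < length w" "Suc j mod d = i mod d"
  then show "\<exists>p\<in>{1..length w}. w ! (p - 1) = w ! j \<and> p mod d = i mod d"
    by (intro bexI[of _ "Suc j"]) auto
qed

definition residues_embed :: "nat \<Rightarrow> 'a list \<Rightarrow> 'a list \<Rightarrow> bool" where
  "residues_embed d u v \<longleftrightarrow> (\<forall>j<length u. \<exists>q<length v. v ! q = u ! j \<and> q mod d = j mod d)"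

lemma kappa_subset_iff:
  assumes "d > 0"
  shows "(\<forall>i\<in>{1..d}. kappa d u i \<subseteq> kappa d v i) \<longleftrightarrow> residues_embed d u v"
  unfolding residues_embed_def
proof
  assume kappa: "\<forall>i\<in>{1..d}. kappa d u i \<subseteq> kappa d v i"
  show "\<forall>j<length u. \<exists>q<length v. v ! q = u ! j \<and> q mod d = j mod d"
  proof (intro allI impI)
    fix j assume "j < length u"
    moreover have i: "Suc (j mod d) \<in> {1..d}" "Suc (j mod d) mod d = Suc j mod d"
      using assms by (auto simp: Suc_le_eq mod_Suc_eq)
    ultimately have "u ! j \<in> kappa d u (Suc (j mod d))"
      unfolding mem_kappa_iff by auto
    with kappa i(1) have "u ! j \<in> kappa d v (Suc (j mod d))" by blast
    then obtain q where q: "q < length v" "v ! q = u ! j" "Suc q mod d = Suc j mod d"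
      unfolding mem_kappa_iff i(2) by blast
    from q(3) have "q mod d = j mod d"
      by (metis Zero_not_Suc mod_Suc nat.inject)
    with q(1,2) show "\<exists>q<length v. v ! q = u ! j \<and> q mod d = j mod d" by blast
  qed
next
  assume pos: "\<forall>j<length u. \<exists>q<length v. v ! q = u ! j \<and> q mod d = j mod d"
  show "\<forall>i\<in>{1..d}. kappa d u i \<subseteq> kappa d v i"
  proof (intro ballI subsetI)
    fix i a assume "a \<in> kappa d u i"
    then obtain j where j: "j < length u" "u ! j = a" "Suc j mod d = i mod d"
      unfolding mem_kappa_iff by blast
    with pos obtain q where q: "q < length v" "v ! q = a" "q mod d = j mod d" by blast
    from q(3) j(3) have "Suc q mod d = i mod d" by (metis mod_Suc_eq)
    with q(1,2) show "a \<in> kappa d v i" unfolding mem_kappa_iff by blast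
  qed
qed

lemma mult_add_mod_dvd: "d dvd k \<Longrightarrow> (n * k + q) mod d = q mod (d::nat)"
  by (auto elim!: dvdE simp: mult.left_commute[of n d])

definition periodic_prefix :: "'a list \<Rightarrow> nat \<Rightarrow> 'a list" where
  "periodic_prefix v n = map (\<lambda>i. v ! (i mod length v)) [0..<n]"

lemma length_periodic_prefix [simp]: "length (periodic_prefix v n) = n"
  by (simp add: periodic_prefix_def)

lemma nth_periodic_prefix [simp]: "i < n \<Longrightarrow> periodic_prefix v n ! i = v ! (i mod length v)"
  by (simp add: periodic_prefix_def)

lemma periodic_prefix_Suc:
  "periodic_prefix v (Suc n) = periodic_prefix v n @ [v ! (n mod length v)]"
  by (simp add: periodic_prefix_def)

lemma periodic_prefix_split:
  "m \<le> n \<Longrightarrow> periodic_prefix v n = periodic_prefix v m @ drop m (periodic_prefix v n)"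
proof -
  assume "m \<le> n"
  then have "take m (periodic_prefix v n) = periodic_prefix v m"
    by (simp add: periodic_prefix_def take_map)
  then show ?thesis by (metis append_take_drop_id)
qed

lemma periodic_prefix_splitngth_add:
  "periodic_prefix v (length v + n) = v @ periodic_prefix v n"
  by (rule nth_equalityI) (auto simp: nth_append le_mod_geq)

lemma concat_replicate_append_take:
  "r \<le> length v \<Longrightarrow> concat (replicate n v) @ take r v = periodic_prefix v (n * length v + r)"
proof (induction n)
  case 0
  show ?case by (rule nth_equalityI) (use 0 in auto)
next
  case (Suc n)
  then show ?case using periodic_prefix_splitngth_add[of v "n * length v + r"] by (simp add: add.assoc)
qed

lemma subw_ind_periodic_prefix_mono:
  "subw_ind d u (periodic_prefix v m) \<Longrightarrow> m \<le> n \<Longrightarrow> n mod d = m mod d \<Longrightarrow>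
   subw_ind d u (periodic_prefix v n)"
  by (metis periodic_prefix_split subw_ind_append_right length_drop length_periodic_prefix
      mod_eq_dvd_iff_nat)

lemma subw_ind_periodic_prefix_nth:
  assumes "v \<noteq> []" and "d dvd length v"
    and "subw_ind d u (periodic_prefix v n)"
  shows "residues_embed d u v"
  unfolding residues_embed_def
proof (intro allI impI)
  fix j assume "j < length u"
  obtain p where "p < n" "periodic_prefix v n ! p = u ! j" "p mod d = j mod d"
    using subw_ind_nth[OF assms(3) \<open>j < length u\<close>] by auto
  with assms(1,2) show "\<exists>q<length v. v ! q = u ! j \<and> q mod d = j mod d"
    by (intro exI[of _ "p mod length v"]) (auto simp: mod_mod_cancel)
qed

lemma subw_ind_periodic_prefix_exists:
  assumes "d dvd length v"
    and "residues_embed d u v"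
  shows "\<exists>n. n mod d = length u mod d \<and> subw_ind d u (periodic_prefix v n)"
  using assms(2) unfolding residues_embed_def
proof (induction u rule: rev_induct)
  case Nil
  show ?case by (intro exI[of _ 0]) (simp add: periodic_prefix_def subw_ind.Nil)
next
  case (snoc a u)
  then obtain n where n: "n mod d = length u mod d" "subw_ind d u (periodic_prefix v n)"
    by (metis length_append_singleton less_SucI nth_append)
  obtain q where q: "q < length v" "v ! q = a" "q mod d = length u mod d"
    using snoc.prems by (metis length_append_singleton lessI nth_append_length)
  \<comment> \<open>position \<open>m\<close> of \<open>v\<^sup>\<omega>\<close> carries \<open>a\<close> and lies a multiple of \<open>d\<close> beyond \<open>n\<close>\<close>
  define m where "m = n * length v + q"
  have "n \<le> m" using q(1) by (cases "length v") (simp_all add: m_def)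
  have "m mod d = n mod d"
    using mult_add_mod_dvd[OF assms(1)] q(3) n(1) by (simp add: m_def)
  then have jump: "d dvd m - n" using \<open>n \<le> m\<close> by (simp add: mod_eq_dvd_iff_nat)
  have "periodic_prefix v (Suc m) = periodic_prefix v n @ drop n (periodic_prefix v m) @ [a]"
    using periodic_prefix_split[OF \<open>n \<le> m\<close>] q(1,2) by (simp add: periodic_prefix_Suc m_def)
  moreover have "subw_ind d [a] (drop n (periodic_prefix v m) @ [a])"
    using jump by (auto intro: subw_ind.insert[OF subw_ind.Cons[OF subw_ind.Nil]])
  ultimately have "subw_ind d (u @ [a]) (periodic_prefix v (Suc m))"
    using subw_ind_append[OF n(2)] by simp
  moreover have "Suc m mod d = length (u @ [a]) mod d"
    using \<open>m mod d = n mod d\<close> n(1) by (metis length_append_singleton mod_Suc_eq)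
  ultimately show ?case by blast
qed

lemma subw_ind_periodic_prefix_period_exists:
  assumes "v \<noteq> []" and "d dvd length v" and "length u mod d = r mod d"
    and "residues_embed d u v"
  shows "\<exists>n. subw_ind d u (periodic_prefix v (n * length v + r))"
proof -
  obtain n where n: "n mod d = r mod d" "subw_ind d u (periodic_prefix v n)"
    using subw_ind_periodic_prefix_exists[OF assms(2,4)] assms(3) by auto
  have "n \<le> n * length v + r"
    using assms(1) by (cases "length v") simp_all
  moreover have "(n * length v + r) mod d = n mod d"
    using mult_add_mod_dvd[OF assms(2)] n(1) by simp
  ultimately show ?thesis
    using subw_ind_periodic_prefix_mono[OF n(2)] by blast
qed

lemma mem_down_d_star_conc_take:
  assumes "r \<le> length v"
  shows "u \<in> down_d d (star_conc v (take r v)) \<longleftrightarrow>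
    (\<exists>n. subw_ind d u (periodic_prefix v (n * length v + r)))"
  using concat_replicate_append_take[OF assms]
  unfolding down_d_def star_conc_def subw_d_iff_subw_ind by auto

theorem mainTheorem13:
  fixes d r :: nat and v w :: "'a list"
  assumes "d \<ge> 1" and "v \<noteq> []" and "d dvd length v" and "r \<le> d - 1"
    and "w = take r v"
  shows "down_d d (star_conc v w) =
    {u. length u mod d = r mod d \<and> (\<forall>i\<in>{1..d}. kappa d u i \<subseteq> kappa d v i)}"
proof -
  have "r \<le> length v"
    using assms(1-4) dvd_imp_le[of d "length v"] by auto
  note down_iff = mem_down_d_star_conc_take[OF this, folded assms(5)]
  note kappa_iff = kappa_subset_iff[of d _ v] assms(1)
  show ?thesis
  proof (intro set_eqI iffI)
    fix u assume "u \<in> down_d d (star_conc v w)"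
    then obtain n where emb: "subw_ind d u (periodic_prefix v (n * length v + r))"
      using down_iff by blast
    have "length u mod d = r mod d"
      using subw_ind_length_mod[OF emb] mult_add_mod_dvd[OF assms(3)] by simp
    with subw_ind_periodic_prefix_nth[OF assms(2,3) emb] kappa_iff
    show "u \<in> {u. length u mod d = r mod d \<and> (\<forall>i\<in>{1..d}. kappa d u i \<subseteq> kappa d v i)}"
      by auto
  next
    fix u assume "u \<in> {u. length u mod d = r mod d \<and> (\<forall>i\<in>{1..d}. kappa d u i \<subseteq> kappa d v i)}"
    with subw_ind_periodic_prefix_period_exists[OF assms(2,3)] kappa_iff down_iff
    show "u \<in> down_d d (star_conc v w)"
      by auto
  qed
qed

end
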